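(* Let $n\ge2$ and $\mu\in(0,\frac1n(\frac{n-1}{n})^{n-1}]$. Let $f>0$ be a solution on $\mathbb{R}$ of $$\mu=\frac{f(x)^{n-1}}{(1+f'(x)^2)^{1/2}}-f(x)^n,$$ and let $V=n\bigl(1+(n-1)\mu^2f^{-2n}\bigr)$. Then for every $x\in\mathbb{R}$, $V(x)f(x)^2\le n^2$.
   Context: The function $f$ is the profile of the Euclidean Delaunay unduloid $\mathcal{D}(\mu)$, parametrized by $(x,\omega)\mapsto(x,f(x)\omega)$, with constant mean curvature $1$. The function $V=\|B\|^2$ is the potential of its stability operator $\Delta-V$. The function $f$ takes values between the two positive roots $a_-(\mu)\le a_+(\mu)$ of $X^n-X^{n-1}+\mu=0$. *)

theory Defs
  imports Complex_Main
begin

end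

theory Submission
  imports Defs
begin

text \<open>As \<open>V f\<^sup>2 = n (f\<^sup>2 + (n - 1) q\<^sup>2)\<close>, it is at most \<open>n (1 + (n - 1)) = n\<^sup>2\<close>.\<close>

lemma delaunay_mu_le:
  fixes a s \<mu> :: real
  assumes "1 \<le> n" "0 < a" "1 \<le> s" "\<mu> = a ^ (n - 1) / s - a ^ n"
  shows "\<mu> \<le> a ^ (n - 1) * (1 - a)"
proof -
  have "a ^ n = a * a ^ (n - 1)"
    using \<open>1 \<le> n\<close> by (simp add: power_minus_mult[symmetric] mult.commute)
  moreover have "a ^ (n - 1) / s \<le> a ^ (n - 1)"
    using assms by (simp add: divide_le_eq)
  ultimately show ?thesis
    using assms(4) by (simp add: algebra_simps)
qed

lemma ratio_le_one_minus:
  fixes a \<mu> :: real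
  assumes "0 < a" "0 < \<mu>" "\<mu> \<le> a ^ m * (1 - a)"
  shows "a < 1" and "\<mu> / a ^ m \<le> 1 - a"
proof -
  have "0 < a ^ m * (1 - a)"
    using assms by linarith
  then show "a < 1"
    using \<open>0 < a\<close> by (simp add: zero_less_mult_iff)
  show "\<mu> / a ^ m \<le> 1 - a"
    using assms by (simp add: divide_le_eq mult.commute)
qed

lemma potential_square_eq:
  fixes a \<mu> :: real
  assumes "1 \<le> n" "0 < a"
  shows "real n * (1 + (real n - 1) * \<mu>\<^sup>2 / a ^ (2 * n)) * a\<^sup>2
       = real n * (a\<^sup>2 + (real n - 1) * (\<mu> / a ^ (n - 1))\<^sup>2)"
proof -
  have "a ^ n = a * a ^ (n - 1)"
    using \<open>1 \<le> n\<close> by (simp add: power_minus_mult[symmetric] mult.commute)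
  then have "a ^ (2 * n) = a\<^sup>2 * (a ^ (n - 1))\<^sup>2"
    by (metis mult.commute power_mult power_mult_distrib)
  then show ?thesis
    using \<open>0 < a\<close> by (simp add: field_simps power2_eq_square)
qed

lemma potential_square_le:
  fixes a \<mu> :: real
  assumes "1 \<le> n" "0 < a" "0 < \<mu>" "\<mu> \<le> a ^ (n - 1) * (1 - a)"
  shows "real n * (1 + (real n - 1) * \<mu>\<^sup>2 / a ^ (2 * n)) * a\<^sup>2 \<le> (real n)\<^sup>2"
proof -
  define q where "q = \<mu> / a ^ (n - 1)"
  have "a < 1" and "q \<le> 1 - a"
    using ratio_le_one_minus assms(2-4) unfolding q_def by auto
  moreover have "0 \<le> q"
    using assms unfolding q_def by simp
  ultimately have "a\<^sup>2 \<le> 1" and "q\<^sup>2 \<le> 1"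
    using \<open>0 < a\<close> by (simp_all add: power_le_one)
  then have "real n * (a\<^sup>2 + (real n - 1) * q\<^sup>2) \<le> real n * (1 + (real n - 1) * 1)"
    using \<open>1 \<le> n\<close> by (intro mult_left_mono add_mono) auto
  then show ?thesis
    unfolding potential_square_eq[OF assms(1,2)] q_def by (simp add: power2_eq_square)
qed

theorem lemma3p1:
  fixes n :: nat and \<mu> :: real and f f' :: "real \<Rightarrow> real"
  assumes n: "n \<ge> 2"
    and mu_pos: "0 < \<mu>"
    and mu_le: "\<mu> \<le> (1 / real n) * ((real n - 1) / real n) ^ (n - 1)"
    and f_pos: "\<And>x. f x > 0"
    and f_deriv: "\<And>x. (f has_real_derivative f' x) (at x)"
    and ode: "\<And>x. \<mu> = f x ^ (n - 1) / sqrt (1 + (f' x)\<^sup>2) - f x ^ n"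
  shows "\<forall>x. real n * (1 + (real n - 1) * \<mu>\<^sup>2 / f x ^ (2 * n)) * (f x)\<^sup>2 \<le> (real n)\<^sup>2"
proof
  fix x
  have "1 \<le> n"
    using n by simp
  moreover have "\<mu> \<le> f x ^ (n - 1) * (1 - f x)"
    using delaunay_mu_le[OF \<open>1 \<le> n\<close> f_pos _ ode] by simp
  ultimately show "real n * (1 + (real n - 1) * \<mu>\<^sup>2 / f x ^ (2 * n)) * (f x)\<^sup>2 \<le> (real n)\<^sup>2"
    using potential_square_le f_pos mu_pos by blast
qed

end
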